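(* Let $a,A$ be real numbers with $a+3>0$ and $$\frac{a+3}{2}=\frac{2}{A+3},$$ and let $b_1,\dots,b_N$, $B_1,\dots,B_N$ be real numbers with $$\sqrt{\frac{2}{a+3}}(b_n+3)=\sqrt{\frac{2}{A+3}}(B_n+3)\qquad(n=1,\dots,N).$$ Let $\eta,\mathcal{E},\lambda_1,\dots,\lambda_N$ be real, let $l,\ell$ be real with $l+\frac12=\frac{2}{A+3}\left(\ell+\frac12\right)$, and set $$E=-\eta\left(\frac{2}{A+3}\right)^2,\quad \xi=-\mathcal{E}\left(\frac{2}{A+3}\right)^2,\quad \mu_n=\left(\frac{2}{A+3}\right)^2\lambda_n .$$ If $u\in C^2((0,\infty))$ satisfies the radial equation of $U(r)=\xi r^{a+1}+\sum_{n=1}^N\mu_n r^{b_n+1}$, $$u''(r)+\left[E-\frac{l(l+1)}{r^2}-\xi r^{a+1}-\sum_{n=1}^N\mu_n r^{b_n+1}\right]u(r)=0,$$ then $v(\rho)=\rho^{-(A+1)/4}u\!\left(\rho^{(A+3)/2}\right)$ (coordinates $r=\rho^{(A+3)/2}$, $u(r)=\rho^{(A+1)/4}v(\rho)$) satisfies the radial equation of $V(\rho)=\eta\rho^{A+1}+\sum_{n=1}^N\lambda_n\rho^{B_n+1}$: $$v''(\rho)+\left[\mathcal{E}-\frac{\ell(\ell+1)}{\rho^2}-\eta\rho^{A+1}-\sum_{n=1}^N\lambda_n\rho^{B_n+1}\right]v(\rho)=0 .$$ In this sense $U$ and $V$ are quantum Newtonianly dual, bound-state eigenfunctions of $U$ (energy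 $E$, angular quantum number $l$) being transformed into eigenfunctions of $V$ (energy $\mathcal{E}$, angular quantum number $\ell$).
   Context: Three-dimensional radial equation (units $\hbar=2m=1$): $u''+\left[E-\frac{l(l+1)}{r^2}-W(r)\right]u=0$ for a central potential $W$, with $u(r)=rR(r)$. "General polynomial potentials" are finite linear combinations of powers $r^{c}$ with arbitrary real exponents $c$. *)

theory Defs
  imports "HOL-Analysis.Analysis"
begin

definition radial_solution :: "(real \<Rightarrow> real) \<Rightarrow> real \<Rightarrow> real \<Rightarrow> (real \<Rightarrow> real) \<Rightarrow> bool" where
  "radial_solution u E l W \<longleftrightarrow>
     (\<exists>u1 u2. \<forall>r>0. (u has_real_derivative u1 r) (at r) \<and>
                      (u1 has_real_derivative u2 r) (at r) \<and>
                      isCont u2 r \<and>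
                      u2 r + (E - l * (l + 1) / r\<^sup>2 - W r) * u r = 0)"

end

theory Submission
  imports Defs
begin

text \<open>
  Substitute r = \<rho>^k and u(r) = \<rho>^m v(\<rho>) with m = (k - 1)/2; this choice of m makes the
  first-order terms of v'' cancel. The radial equation for u then becomes a radial equation
  for v whose potential minus energy is k^2 \<rho>^(2k-2) (W(\<rho>^k) - E) and whose angular number
  ll satisfies ll + 1/2 = k (l + 1/2), since then ll(ll+1) = k^2 l(l+1) + m(m+1).
  For k = (A+3)/2 the factor k^2 \<rho>^(2k-2) turns the term r^(a+1) into a constant (as
  k(a+3) = 2), which becomes the new energy, turns the old energy into the coupling of
  \<rho>^(A+1), and maps each r^(b_n+1) to \<rho>^(B_n+1).
\<close>

lemma has_real_derivative_powr_mult_comp_powr: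
  assumes "x > 0" and "(f has_real_derivative f') (at (x powr k))"
  shows "((\<lambda>y. y powr p * f (y powr k)) has_real_derivative
           p * x powr (p - 1) * f (x powr k) + k * x powr (p + k - 1) * f') (at x)"
proof -
  have "((\<lambda>y. f (y powr k)) has_real_derivative f' * (k * x powr (k - 1))) (at x)"
    using DERIV_chain2[OF assms(2) has_real_derivative_powr[OF assms(1)]] .
  note product = DERIV_mult[OF has_real_derivative_powr[OF assms(1), of p] this]
  have "f' * (k * x powr (k - 1)) * x powr p = k * (x powr p * x powr (k - 1)) * f'"
    by (simp add: algebra_simps)
  also have "x powr p * x powr (k - 1) = x powr (p + k - 1)"
    by (simp add: powr_add[symmetric] add_diff_eq)
  finally have "f' * (k * x powr (k - 1)) * x powr p = k * x powr (p + k - 1) * f'" .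
  with product show ?thesis
    by (simp only:)
qed

lemma has_real_derivative_powr_substitution:
  assumes "x > 0" and m: "2 * m = k - 1"
    and u': "(u has_real_derivative u1 (x powr k)) (at (x powr k))"
    and u'': "(u1 has_real_derivative u2 (x powr k)) (at (x powr k))"
  shows "((\<lambda>y. y powr (- m) * u (y powr k)) has_real_derivative
            - m * (x powr (- m - 1) * u (x powr k)) + k * (x powr (k - 1 - m) * u1 (x powr k))) (at x)"
    and "((\<lambda>y. - m * (y powr (- m - 1) * u (y powr k)) + k * (y powr (k - 1 - m) * u1 (y powr k)))
          has_real_derivative
            x powr (- m) * (k\<^sup>2 * x powr (2 * k - 2) * u2 (x powr k)
                            + m * (m + 1) / x\<^sup>2 * u (x powr k))) (at x)"
proof -
  have pow_sq: "x powr (- m - 2) = x powr (- m) / x\<^sup>2"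
    using \<open>x > 0\<close> by (simp add: powr_diff powr_numeral)
  show "((\<lambda>y. y powr (- m) * u (y powr k)) has_real_derivative
          - m * (x powr (- m - 1) * u (x powr k)) + k * (x powr (k - 1 - m) * u1 (x powr k))) (at x)"
    using has_real_derivative_powr_mult_comp_powr[OF \<open>x > 0\<close> u', of "- m"]
    by (simp add: algebra_simps)
  have "- m * ((- m - 1) * x powr (- m - 1 - 1) * u (x powr k) + k * x powr (- m - 1 + k - 1) * u1 (x powr k))
        + k * ((k - 1 - m) * x powr (k - 1 - m - 1) * u1 (x powr k) + k * x powr (k - 1 - m + k - 1) * u2 (x powr k))
      = x powr (- m) * (k\<^sup>2 * x powr (2 * k - 2) * u2 (x powr k) + m * (m + 1) / x\<^sup>2 * u (x powr k))"
  proof -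
    have "- m - 1 - 1 = - m - 2" "- m - 1 + k - 1 = k - 1 - m - 1" by simp_all
    moreover have "x powr (k - 1 - m + k - 1) = x powr (- m) * x powr (2 * k - 2)"
      unfolding powr_add[symmetric] by (rule arg_cong[of _ _ "(powr) x"]) simp
    moreover have "k - 1 - m = m" using m by simp
    ultimately show ?thesis
      using pow_sq by (simp add: algebra_simps power2_eq_square)
  qed
  then show "((\<lambda>y. - m * (y powr (- m - 1) * u (y powr k)) + k * (y powr (k - 1 - m) * u1 (y powr k)))
          has_real_derivative
            x powr (- m) * (k\<^sup>2 * x powr (2 * k - 2) * u2 (x powr k) + m * (m + 1) / x\<^sup>2 * u (x powr k))) (at x)"
    by (intro DERIV_cong[OF DERIV_add[OF
          DERIV_cmult[OF has_real_derivative_powr_mult_comp_powr[OF \<open>x > 0\<close> u', of "- m - 1"]]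
          DERIV_cmult[OF has_real_derivative_powr_mult_comp_powr[OF \<open>x > 0\<close> u'', of "k - 1 - m"]]]])
qed

lemma radial_solution_cong:
  assumes "\<And>r. r > 0 \<Longrightarrow> E - W r = E' - W' r"
  shows "radial_solution u E l W = radial_solution u E' l W'"
proof -
  have "\<And>r. r > 0 \<Longrightarrow> E - l * (l + 1) / r\<^sup>2 - W r = E' - l * (l + 1) / r\<^sup>2 - W' r"
    using assms by (simp add: algebra_simps)
  then show ?thesis
    unfolding radial_solution_def by (metis (no_types, opaque_lifting))
qed

lemma radial_solution_powr_substitution:
  assumes u: "radial_solution u E l W"
    and m: "2 * m = k - 1"
    and ll: "ll + 1/2 = k * (l + 1/2)"
  shows "radial_solution (\<lambda>\<rho>. \<rho> powr (- m) * u (\<rho> powr k)) 0 ll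
           (\<lambda>\<rho>. k\<^sup>2 * \<rho> powr (2 * k - 2) * (W (\<rho> powr k) - E))"
proof -
  obtain u1 u2 where U: "\<And>r. r > 0 \<Longrightarrow> (u has_real_derivative u1 r) (at r) \<and>
      (u1 has_real_derivative u2 r) (at r) \<and> isCont u2 r \<and>
      u2 r + (E - l * (l + 1) / r\<^sup>2 - W r) * u r = 0"
    using u unfolding radial_solution_def by blast
  have angular: "k\<^sup>2 * (l * (l + 1)) + m * (m + 1) = ll * (ll + 1)"
  proof -
    have "2 * ll + 1 = k * (2 * l + 1)"
      using ll by (simp add: algebra_simps)
    then have "(2 * ll + 1)\<^sup>2 = k\<^sup>2 * (2 * l + 1)\<^sup>2"
      by (simp add: power_mult_distrib)
    with m show ?thesis
      by algebra
  qed
  show ?thesis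
    unfolding radial_solution_def
  proof (intro exI allI impI conjI)
    fix \<rho> :: real
    assume "\<rho> > 0"
    define r where "r = \<rho> powr k"
    have "r > 0"
      using \<open>\<rho> > 0\<close> by (simp add: r_def)
    note Ur = U[OF this, unfolded r_def]
    show "((\<lambda>\<rho>. \<rho> powr - m * u (\<rho> powr k)) has_real_derivative
            - m * (\<rho> powr (- m - 1) * u (\<rho> powr k)) + k * (\<rho> powr (k - 1 - m) * u1 (\<rho> powr k))) (at \<rho>)"
     and "((\<lambda>y. - m * (y powr (- m - 1) * u (y powr k)) + k * (y powr (k - 1 - m) * u1 (y powr k)))
          has_real_derivative
            \<rho> powr (- m) * (k\<^sup>2 * \<rho> powr (2 * k - 2) * u2 (\<rho> powr k)
                            + m * (m + 1) / \<rho>\<^sup>2 * u (\<rho> powr k))) (at \<rho>)"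
      using has_real_derivative_powr_substitution[OF \<open>\<rho> > 0\<close> m] Ur by blast+
    have "isCont (\<lambda>x. x powr k) \<rho>"
      using \<open>\<rho> > 0\<close> by (intro continuous_intros) auto
    then have "isCont (\<lambda>x. u (x powr k)) \<rho>" "isCont (\<lambda>x. u2 (x powr k)) \<rho>"
      using isCont_o2 Ur DERIV_isCont by blast+
    then show "isCont (\<lambda>x. x powr (- m) * (k\<^sup>2 * x powr (2 * k - 2) * u2 (x powr k)
                            + m * (m + 1) / x\<^sup>2 * u (x powr k))) \<rho>"
      using \<open>\<rho> > 0\<close> by (intro continuous_intros) auto
    have "r\<^sup>2 = \<rho> powr (2 * k)"
      by (simp add: r_def power2_eq_square powr_add[symmetric])
    also have "\<dots> = \<rho> powr (2 * k - 2) * \<rho> powr 2"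
      by (simp add: powr_add[symmetric])
    also have "\<rho> powr 2 = \<rho>\<^sup>2"
      using \<open>\<rho> > 0\<close> by simp
    finally have weight: "\<rho> powr (2 * k - 2) / r\<^sup>2 = 1 / \<rho>\<^sup>2"
      using \<open>\<rho> > 0\<close> by simp
    have u2_eq: "u2 r = (W r - E) * u r + l * (l + 1) / r\<^sup>2 * u r"
      using Ur[folded r_def] by (simp add: algebra_simps)
    have "k\<^sup>2 * \<rho> powr (2 * k - 2) * u2 r
        = k\<^sup>2 * \<rho> powr (2 * k - 2) * (W r - E) * u r + k\<^sup>2 * (l * (l + 1)) * (\<rho> powr (2 * k - 2) / r\<^sup>2) * u r"
      by (subst u2_eq) (simp add: algebra_simps)
    also have "\<dots> = (k\<^sup>2 * \<rho> powr (2 * k - 2) * (W r - E) + k\<^sup>2 * (l * (l + 1)) / \<rho>\<^sup>2) * u r"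
      unfolding weight by (simp add: algebra_simps add_divide_distrib)
    finally have scaled_u2: "k\<^sup>2 * \<rho> powr (2 * k - 2) * u2 r
        = (k\<^sup>2 * \<rho> powr (2 * k - 2) * (W r - E) + k\<^sup>2 * (l * (l + 1)) / \<rho>\<^sup>2) * u r" .
    have "\<rho> powr (- m) * (k\<^sup>2 * \<rho> powr (2 * k - 2) * u2 r + m * (m + 1) / \<rho>\<^sup>2 * u r)
        = \<rho> powr (- m) * (k\<^sup>2 * \<rho> powr (2 * k - 2) * (W r - E) + ll * (ll + 1) / \<rho>\<^sup>2) * u r"
      unfolding scaled_u2 angular[symmetric] by (simp add: algebra_simps add_divide_distrib)
    then show "\<rho> powr - m * (k\<^sup>2 * \<rho> powr (2 * k - 2) * u2 (\<rho> powr k) + m * (m + 1) / \<rho>\<^sup>2 * u (\<rho> powr k))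
        + (0 - ll * (ll + 1) / \<rho>\<^sup>2 - k\<^sup>2 * \<rho> powr (2 * k - 2) * (W (\<rho> powr k) - E))
          * (\<rho> powr - m * u (\<rho> powr k)) = 0"
      unfolding r_def by (simp add: algebra_simps)
  qed
qed

lemma powr_monomial_rescale:
  fixes x k c q :: real
  assumes "k \<noteq> 0"
  shows "k\<^sup>2 * x powr (2 * k - 2) * ((1 / k)\<^sup>2 * c * (x powr k) powr q) = c * x powr (k * (q + 2) - 2)"
proof -
  have "x powr (2 * k - 2) * (x powr k) powr q = x powr (k * (q + 2) - 2)"
    by (simp add: powr_powr powr_add[symmetric] algebra_simps)
  with assms show ?thesis
    by (simp add: power_one_over field_simps)
qed

lemma powr_substitution_polynomial_potential:
  fixes x k a EE \<eta> :: real and b B lam :: "nat \<Rightarrow> real"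
  assumes "x > 0" and "k \<noteq> 0" and "k * (a + 3) = 2"
    and "\<forall>n\<in>{1..N}. B n + 3 = k * (b n + 3)"
  shows "k\<^sup>2 * x powr (2 * k - 2) *
           ((- EE * (1 / k)\<^sup>2) * (x powr k) powr (a + 1)
            + (\<Sum>n=1..N. ((1 / k)\<^sup>2 * lam n) * (x powr k) powr (b n + 1)) - (- \<eta> * (1 / k)\<^sup>2))
         = \<eta> * x powr (2 * k - 2) + (\<Sum>n=1..N. lam n * x powr (B n + 1)) - EE"
proof -
  have "k\<^sup>2 * x powr (2 * k - 2) * ((- EE * (1 / k)\<^sup>2) * (x powr k) powr (a + 1)) = - EE * x powr (k * (a + 3) - 2)"
    using powr_monomial_rescale[OF \<open>k \<noteq> 0\<close>, of x "- EE" "a + 1"] by (simp add: algebra_simps)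
  also have "\<dots> = - EE"
    using assms(1,3) by simp
  finally have first: "k\<^sup>2 * x powr (2 * k - 2) * ((- EE * (1 / k)\<^sup>2) * (x powr k) powr (a + 1)) = - EE" .
  have "k\<^sup>2 * x powr (2 * k - 2) * ((1 / k)\<^sup>2 * lam n * (x powr k) powr (b n + 1)) = lam n * x powr (B n + 1)"
    if "n \<in> {1..N}" for n
  proof -
    have "k * (b n + 1 + 2) - 2 = B n + 1"
      using bspec[OF assms(4) that] by (simp add: algebra_simps)
    then show ?thesis
      using powr_monomial_rescale[OF \<open>k \<noteq> 0\<close>, of x "lam n" "b n + 1"] by (simp only:)
  qed
  then have sum: "k\<^sup>2 * x powr (2 * k - 2) * (\<Sum>n=1..N. ((1 / k)\<^sup>2 * lam n) * (x powr k) powr (b n + 1))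
      = (\<Sum>n=1..N. lam n * x powr (B n + 1))"
    unfolding sum_distrib_left by (intro sum.cong) auto
  have last: "k\<^sup>2 * x powr (2 * k - 2) * (- \<eta> * (1 / k)\<^sup>2) = - \<eta> * x powr (2 * k - 2)"
    using \<open>k \<noteq> 0\<close> by (simp add: power_one_over field_simps)
  show ?thesis
    unfolding distrib_left right_diff_distrib first sum last by simp
qed

lemma newtonian_dual_parameters:
  fixes a A l ll :: real and b B :: "nat \<Rightarrow> real"
  assumes ha: "a + 3 > 0"
    and haA: "(a + 3) / 2 = 2 / (A + 3)"
    and hbB: "\<forall>n\<in>{1..N}. sqrt (2 / (a + 3)) * (b n + 3) = sqrt (2 / (A + 3)) * (B n + 3)"
    and hl: "l + 1/2 = 2 / (A + 3) * (ll + 1/2)"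
  defines "k \<equiv> (A + 3) / 2"
  shows "k > 0" and "2 / (A + 3) = 1 / k" and "k * (a + 3) = 2"
    and "\<forall>n\<in>{1..N}. B n + 3 = k * (b n + 3)" and "ll + 1/2 = k * (l + 1/2)"
proof -
  have "2 / (A + 3) > 0"
    using ha haA by simp
  then show "k > 0" and inv_k: "2 / (A + 3) = 1 / k"
    by (simp_all add: k_def zero_less_divide_iff)
  then show a_k: "k * (a + 3) = 2" and "ll + 1/2 = k * (l + 1/2)"
    using haA hl by (simp_all add: field_simps)
  show "\<forall>n\<in>{1..N}. B n + 3 = k * (b n + 3)"
  proof
    fix n assume "n \<in> {1..N}"
    have "2 / (a + 3) = k"
      using a_k ha by (simp add: field_simps)
    then have "sqrt (2 / (a + 3)) = sqrt k" and "sqrt (2 / (A + 3)) = 1 / sqrt k"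
      using inv_k by (simp_all add: real_sqrt_divide)
    with bspec[OF hbB \<open>n \<in> {1..N}\<close>] have "sqrt k * (b n + 3) = (B n + 3) / sqrt k"
      by simp
    then have "sqrt k * (sqrt k * (b n + 3)) = B n + 3"
      using \<open>k > 0\<close> by (simp add: field_simps)
    then show "B n + 3 = k * (b n + 3)"
      using \<open>k > 0\<close> by (simp add: mult.assoc[symmetric])
  qed
qed

theorem mainTheorem5:
  fixes a A \<eta> EE l ll :: real and N :: nat
    and b B lam :: "nat \<Rightarrow> real" and u :: "real \<Rightarrow> real"
  assumes ha: "a + 3 > 0"
    and haA: "(a + 3) / 2 = 2 / (A + 3)"
    and hbB: "\<forall>n\<in>{1..N}. sqrt (2 / (a + 3)) * (b n + 3) = sqrt (2 / (A + 3)) * (B n + 3)"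
    and hl: "l + 1/2 = 2 / (A + 3) * (ll + 1/2)"
    and hu: "radial_solution u (- \<eta> * (2 / (A + 3))\<^sup>2) l
               (\<lambda>r. (- EE * (2 / (A + 3))\<^sup>2) * r powr (a + 1)
                    + (\<Sum>n=1..N. ((2 / (A + 3))\<^sup>2 * lam n) * r powr (b n + 1)))"
  shows "radial_solution (\<lambda>\<rho>. \<rho> powr (- (A + 1) / 4) * u (\<rho> powr ((A + 3) / 2))) EE ll
           (\<lambda>\<rho>. \<eta> * \<rho> powr (A + 1) + (\<Sum>n=1..N. lam n * \<rho> powr (B n + 1)))"
proof -
  define k where "k = (A + 3) / 2"
  note params = newtonian_dual_parameters[OF ha haA hbB hl, folded k_def]
  have "2 * ((A + 1) / 4) = k - 1"
    by (simp add: k_def)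
  from radial_solution_powr_substitution[OF hu[unfolded params(2)] this params(5)]
  have "radial_solution (\<lambda>\<rho>. \<rho> powr (- ((A + 1) / 4)) * u (\<rho> powr k)) EE ll
      (\<lambda>\<rho>. \<eta> * \<rho> powr (2 * k - 2) + (\<Sum>n=1..N. lam n * \<rho> powr (B n + 1)))"
    using powr_substitution_polynomial_potential[OF _ _ params(3,4)] params(1)
    by (subst (asm) radial_solution_cong) auto
  moreover have "2 * k - 2 = A + 1" and "(A + 3) / 2 = k"
    by (simp_all add: k_def)
  moreover have "- (A + 1) / 4 = - ((A + 1) / 4)"
    by linarith
  ultimately show ?thesis
    by (simp only:)
qed

end
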